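(* Let $k$ be an even positive integer and $\ell$ an odd positive integer. Let $GO_k(\ell)=\{g\in G_k(\ell): g\text{ odd}\}$ and $GE_k(\ell)=\{g\in G_k(\ell): g\text{ even}\}$. Then, as formal power series in $t$, \[ \sum_{c\ge0}\operatorname{re}_k(\ell,c)\frac{t^c}{c!}=\exp\Big(\sum_{g\in GO_k(\ell)}\frac{\ell^{g-1}}{g}t^g\Big)\cosh\Big(\sum_{g\in GE_k(\ell)}\frac{\ell^{g-1}}{g}t^g\Big), \] \[ \sum_{c\ge0}\operatorname{ro}_k(\ell,c)\frac{t^c}{c!}=\exp\Big(\sum_{g\in GO_k(\ell)}\frac{\ell^{g-1}}{g}t^g\Big)\sinh\Big(\sum_{g\in GE_k(\ell)}\frac{\ell^{g-1}}{g}t^g\Big). \] In particular, for $\ell=1$ (so that roots of the identity permutation are counted), \[ \sum_{c\ge0}\operatorname{re}_k(1,c)\frac{t^c}{c!}=\exp\Big(\sum_{g\mid k,\ g\text{ odd}}\frac{t^g}{g}\Big)\cosh\Big(\sum_{g\mid k,\ g\text{ even}}\frac{t^g}{g}\Big),\quad \sum_{c\ge0}\operatorname{ro}_k(1,c)\frac{t^c}{c!}=\exp\Big(\sum_{g\mid k,\ g\text{ odd}}\frac{t^g}{g}\Big)\sinh\Big(\sum_{g\mid k,\ g\text{ even}}\frac{t^g}{g}\Big). \]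
   Context: $G_k(\ell)=\{g\in\mathbb N:\gcd(g\ell,k)=g\}$. A permutation of cycle type $(\ell)^c$ is a permutation of an $\ell c$-element set whose disjoint cycle decomposition consists of exactly $c$ cycles, all of length $\ell$. $\operatorname{re}_k(\ell,c)$ (resp. $\operatorname{ro}_k(\ell,c)$) denotes the number of even (resp. odd) permutations $\tau$ of the same set with $\tau^k=\sigma$, for any fixed $\sigma$ of cycle type $(\ell)^c$; for $\ell=1$, $\sigma$ is the identity on $c$ points. *)

theory Defs
  imports "HOL-Computational_Algebra.Formal_Power_Series" "HOL-Combinatorics.Permutations" "HOL-Combinatorics.Orbits"
begin

definition Gset :: "nat \<Rightarrow> nat \<Rightarrow> nat set" where
  "Gset k l = {g. gcd (g * l) k = g}"
definition GOset :: "nat \<Rightarrow> nat \<Rightarrow> nat set" where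
  "GOset k l = {g \<in> Gset k l. odd g}"
definition GEset :: "nat \<Rightarrow> nat \<Rightarrow> nat set" where
  "GEset k l = {g \<in> Gset k l. even g}"

definition has_cycle_type :: "('a \<Rightarrow> 'a) \<Rightarrow> 'a set \<Rightarrow> nat \<Rightarrow> nat \<Rightarrow> bool" where
  "has_cycle_type \<sigma> S l c \<longleftrightarrow> finite S \<and> \<sigma> permutes S \<and> card S = l * c \<and>
     (\<forall>x\<in>S. card (orbit \<sigma> x) = l) \<and> card ((\<lambda>x. orbit \<sigma> x) ` S) = c"

definition re_roots :: "nat \<Rightarrow> ('a \<Rightarrow> 'a) \<Rightarrow> 'a set \<Rightarrow> nat" where
  "re_roots k \<sigma> S = card {\<tau>. \<tau> permutes S \<and> \<tau> ^^ k = \<sigma> \<and> evenperm \<tau>}"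
definition ro_roots :: "nat \<Rightarrow> ('a \<Rightarrow> 'a) \<Rightarrow> 'a set \<Rightarrow> nat" where
  "ro_roots k \<sigma> S = card {\<tau>. \<tau> permutes S \<and> \<tau> ^^ k = \<sigma> \<and> \<not> evenperm \<tau>}"

definition fps_cosh :: "'a::field_char_0 \<Rightarrow> 'a fps" where
  "fps_cosh c = Abs_fps (\<lambda>n. if even n then c ^ n / of_nat (fact n) else 0)"
definition fps_sinh :: "'a::field_char_0 \<Rightarrow> 'a fps" where
  "fps_sinh c = Abs_fps (\<lambda>n. if odd n then c ^ n / of_nat (fact n) else 0)"

definition egf :: "(nat \<Rightarrow> nat) \<Rightarrow> real fps" where
  "egf a = Abs_fps (\<lambda>c. real (a c) / fact c)"

end

theory Submission
  imports Defs "HOL-Algebra.Sym_Groups" "HOL-Number_Theory.Cong"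
begin

text \<open>Let \<open>\<tau>\<^sup>k = \<sigma>\<close>, fix a point \<open>x0\<close> and let \<open>C0\<close> be its \<open>\<sigma>\<close>-cycle. Since \<open>\<tau>\<close> commutes
  with \<open>\<sigma>\<close> it permutes the \<open>\<sigma>\<close>-cycles; let \<open>g\<close> be the least \<open>n > 0\<close> with
  \<open>\<tau>\<^sup>n x0 \<in> C0\<close>. Then \<open>g\<close> divides \<open>k\<close>, and writing \<open>\<tau>\<^sup>g x0 = \<sigma>\<^sup>m x0\<close>, the
  relation \<open>\<tau>\<^sup>k = \<sigma>\<close> forces \<open>(k/g) m \<equiv> 1 (mod l)\<close>; so \<open>g \<in> G_k(l)\<close> and \<open>m\<close>
  is determined by \<open>g\<close>. Hence the \<open>\<tau>\<close>-cycle of \<open>x0\<close> has length \<open>g l\<close> and is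
  determined by the points \<open>\<tau> x0, \<dots>, \<tau>\<^sup>g\<^sup>-\<^sup>1 x0\<close>, which may be any points of
  \<open>g - 1\<close> further distinct \<open>\<sigma>\<close>-cycles, i.e. \<open>l\<^sup>g\<^sup>-\<^sup>1 (c-1)\<cdots>(c-g+1)\<close> choices.
  Removing that cycle leaves a \<open>k\<close>-th root of a permutation of type \<open>(l)\<^sup>c\<^sup>-\<^sup>g\<close>,
  and as \<open>l\<close> is odd the removed cycle is even iff \<open>g\<close> is odd. The resulting recurrence
  is the coefficient recurrence of the system \<open>F' = P\<^sub>O' F + P\<^sub>E' G\<close>,
  \<open>G' = P\<^sub>O' G + P\<^sub>E' F\<close>, which is solved by \<open>exp P\<^sub>O cosh P\<^sub>E\<close> and
  \<open>exp P\<^sub>O sinh P\<^sub>E\<close>.\<close>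

section \<open>Powers of permutations and the sets \<open>G\<^sub>k(l)\<close>\<close>

lemma funpow_mod_least_power:
  assumes "permutation p"
  shows "(p ^^ i) a = (p ^^ (i mod least_power p a)) a"
proof -
  let ?L = "least_power p a"
  have "(p ^^ i) a = (p ^^ (i mod ?L)) ((p ^^ (i - i mod ?L)) a)"
    by (metis add_diff_inverse_nat funpow_add mod_less_eq_dividend not_le o_apply)
  also have "\<dots> = (p ^^ (i mod ?L)) a"
    using least_power_dvd[OF assms] by (metis dvd_minus_mod)
  finally show ?thesis .
qed

lemma funpow_eq_iff_mod_least_power:
  assumes "permutation p"
  shows "(p ^^ i) a = (p ^^ j) a \<longleftrightarrow> i mod least_power p a = j mod least_power p a"
proof
  let ?L = "least_power p a"
  assume "(p ^^ i) a = (p ^^ j) a"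
  then have eq: "(p ^^ (i mod ?L)) a = (p ^^ (j mod ?L)) a"
    using funpow_mod_least_power[OF assms] by metis
  have "\<forall>i'<?L. \<forall>j'<?L. i' \<noteq> j' \<longrightarrow> (p ^^ i') a \<noteq> (p ^^ j') a"
    using cycle_of_permutation[OF assms, of a] by (simp add: distinct_conv_nth)
  then show "i mod ?L = j mod ?L"
    using eq least_power_of_permutation(2)[OF assms] by (meson mod_less_divisor)
qed (metis funpow_mod_least_power[OF assms])

lemma card_orbit_eq_least_power:
  assumes "permutation p"
  shows "card (orbit p a) = least_power p a"
proof -
  have "orbit p a = set (support p a)"
    using orbit_altdef_permutation[OF assms] support_set[OF assms] by auto
  then show ?thesis using cycle_of_permutation[OF assms] distinct_card by fastforce
qed

lemma funpow_apply_commute: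
  assumes "\<And>x. f (g x) = g (f x)"
  shows "(f ^^ n) ((g ^^ m) x) = (g ^^ m) ((f ^^ n) x)"
proof -
  have "f ((g ^^ m) x) = (g ^^ m) (f x)" for x
    by (induction m) (auto simp: assms)
  then show ?thesis by (induction n) auto
qed

lemma funpow_eq_on_invariant:
  assumes "\<And>x. x \<in> A \<Longrightarrow> f x \<in> A" "\<And>x. x \<in> A \<Longrightarrow> f x = g x" "x \<in> A"
  shows "(f ^^ n) x = (g ^^ n) x \<and> (f ^^ n) x \<in> A"
  using assms by (induction n) auto

lemma funpow_perm_restrict:
  assumes "\<And>x. x \<in> A \<Longrightarrow> f x \<in> A"
  shows "perm_restrict f A ^^ n = perm_restrict (f ^^ n) A"
proof
  fix x show "(perm_restrict f A ^^ n) x = perm_restrict (f ^^ n) A x"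
  proof (cases "x \<in> A")
    case True
    then show ?thesis
      using funpow_eq_on_invariant[of A "perm_restrict f A" f x n] assms
      by (simp add: perm_restrict_def)
  next
    case False
    then have "(perm_restrict f A ^^ n) x = x" by (induction n) (simp_all add: perm_restrict_def)
    then show ?thesis using False by (simp add: perm_restrict_def)
  qed
qed

lemma Gset_iff:
  assumes "k > 0"
  shows "g \<in> Gset k l \<longleftrightarrow> g > 0 \<and> g dvd k \<and> coprime (k div g) l"
proof
  assume "g \<in> Gset k l"
  then have gcd_eq: "gcd (g * l) k = g" by (simp add: Gset_def)
  have "g > 0" using gcd_eq assms by (cases "g = 0") auto
  have "g dvd k" using gcd_eq by (metis gcd_dvd2)
  then obtain k' where k: "k = g * k'" ..
  have "g * gcd l k' = g" using gcd_eq k gcd_mult_distrib_nat by metis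
  then have "gcd l k' = 1" using \<open>g > 0\<close> by simp
  then have "coprime (k div g) l"
    using k \<open>g > 0\<close> by (simp add: coprime_iff_gcd_eq_1 gcd.commute)
  with \<open>g > 0\<close> \<open>g dvd k\<close> show "g > 0 \<and> g dvd k \<and> coprime (k div g) l" by blast
next
  assume g: "g > 0 \<and> g dvd k \<and> coprime (k div g) l"
  then obtain k' where k: "k = g * k'" by blast
  have "k div g = k'" using k g by simp
  then have "gcd l k' = 1" using g by (simp add: coprime_iff_gcd_eq_1 gcd.commute)
  then have "gcd (g * l) k = g" using k gcd_mult_distrib_nat by (metis mult.right_neutral)
  then show "g \<in> Gset k l" by (simp add: Gset_def)
qed

lemma Gset_subset_atLeastAtMost: "k > 0 \<Longrightarrow> Gset k l \<subseteq> {1..k}"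
  using Gset_iff by (auto intro: dvd_imp_le)

lemma finite_Gset: "k > 0 \<Longrightarrow> finite (Gset k l)"
  using Gset_subset_atLeastAtMost finite_subset by blast

lemma finite_GOset: "k > 0 \<Longrightarrow> finite (GOset k l)"
  unfolding GOset_def using finite_Gset by auto

lemma finite_GEset: "k > 0 \<Longrightarrow> finite (GEset k l)"
  unfolding GEset_def using finite_Gset by auto

lemma Gset_one: "Gset k 1 = {g. g dvd k}"
proof -
  have "gcd g k = g \<longleftrightarrow> g dvd k" for g :: nat
    by (metis gcd_dvd2 gcd_nat.absorb1)
  then show ?thesis by (simp add: Gset_def)
qed

definition perm_roots :: "nat \<Rightarrow> ('a \<Rightarrow> 'a) \<Rightarrow> 'a set \<Rightarrow> ('a \<Rightarrow> 'a) set" where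
  "perm_roots k \<sigma> S = {\<tau>. \<tau> permutes S \<and> \<tau> ^^ k = \<sigma>}"

lemma finite_perm_roots: "finite S \<Longrightarrow> finite (perm_roots k \<sigma> S)"
  unfolding perm_roots_def using finite_permutations by (rule finite_subset[rotated]) auto

section \<open>Permutations whose cycles all have length \<open>l\<close>\<close>

locale uniform_cycles =
  fixes \<sigma> :: "'a \<Rightarrow> 'a" and S :: "'a set" and l :: nat
  assumes finite_S: "finite S" and permutes_S: "\<sigma> permutes S"
    and card_orbit: "\<And>x. x \<in> S \<Longrightarrow> card (orbit \<sigma> x) = l" and length_pos: "l > 0"
begin

lemma permutation: "permutation \<sigma>"
  using finite_S permutes_S permutation_permutes by blast

lemma funpow_eq_iff: "x \<in> S \<Longrightarrow> (\<sigma> ^^ i) x = (\<sigma> ^^ j) x \<longleftrightarrow> i mod l = j mod l"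
  using funpow_eq_iff_mod_least_power[OF permutation] card_orbit
    card_orbit_eq_least_power[OF permutation] by metis

lemma funpow_length: "x \<in> S \<Longrightarrow> (\<sigma> ^^ l) x = x"
  using funpow_eq_iff[of x l 0] by simp

lemma funpow_in: "x \<in> S \<Longrightarrow> (\<sigma> ^^ i) x \<in> S"
  using permutes_funpow[OF permutes_S] permutes_in_image by metis

lemma apply_in: "x \<in> S \<Longrightarrow> \<sigma> x \<in> S"
  using permutes_S permutes_in_image by metis

lemma apply_outside: "x \<notin> S \<Longrightarrow> \<sigma> x = x"
  using permutes_S permutes_not_in by metis

lemma in_orbit_iff: "y \<in> orbit \<sigma> x \<longleftrightarrow> (\<exists>i. y = (\<sigma> ^^ i) x)"
  using orbit_altdef_permutation[OF permutation] by auto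

lemma self_in_orbit: "x \<in> orbit \<sigma> x"
  using permutation_self_in_orbit[OF permutation] .

lemma funpow_mem_orbit: "(\<sigma> ^^ i) x \<in> orbit \<sigma> x"
  unfolding in_orbit_iff by blast

lemma orbit_subset_S: "x \<in> S \<Longrightarrow> orbit \<sigma> x \<subseteq> S"
  using funpow_in in_orbit_iff by auto

lemma same_orbit: "y \<in> orbit \<sigma> x \<Longrightarrow> orbit \<sigma> y = orbit \<sigma> x"
  using orbit_cyclic_eq3[OF cyclic_on_orbit'[OF permutation]] .

lemma orbit_eq_iff: "orbit \<sigma> y = orbit \<sigma> x \<longleftrightarrow> y \<in> orbit \<sigma> x"
  using same_orbit self_in_orbit by metis

lemma orbit_funpow: "orbit \<sigma> ((\<sigma> ^^ i) x) = orbit \<sigma> x"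
  using same_orbit[OF funpow_mem_orbit] .

definition invariant :: "'a set \<Rightarrow> bool" where
  "invariant A \<longleftrightarrow> A \<subseteq> S \<and> (\<forall>x\<in>A. \<sigma> x \<in> A)"

lemma invariant_funpow: "invariant A \<Longrightarrow> x \<in> A \<Longrightarrow> (\<sigma> ^^ i) x \<in> A"
  unfolding invariant_def by (induction i) auto

lemma invariant_orbit_subset: "invariant A \<Longrightarrow> x \<in> A \<Longrightarrow> orbit \<sigma> x \<subseteq> A"
  using invariant_funpow in_orbit_iff by auto

lemma card_invariant:
  assumes "invariant A"
  shows "card A = l * card (orbit \<sigma> ` A)"
proof -
  have A: "A = \<Union> (orbit \<sigma> ` A)"
    using invariant_orbit_subset[OF assms] self_in_orbit by blast
  have "finite A" using assms finite_S finite_subset unfolding invariant_def by blast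
  have disjoint: "disjoint (orbit \<sigma> ` A)"
    by (rule disjointI) (metis imageE disjoint_iff same_orbit)
  have "card A = sum card (orbit \<sigma> ` A)"
    by (subst A, rule card_Union_disjoint[OF disjoint])
      (use invariant_orbit_subset[OF assms] \<open>finite A\<close> finite_subset in blast)
  also have "\<dots> = sum (\<lambda>_. l) (orbit \<sigma> ` A)"
    using card_orbit assms unfolding invariant_def by (intro sum.cong) auto
  finally show ?thesis by simp
qed

lemma invariant_preimage:
  assumes "invariant A" "x \<in> S" "\<sigma> x \<in> A" shows "x \<in> A"
proof -
  have "x = (\<sigma> ^^ (l - 1)) (\<sigma> x)"
    using funpow_length[OF assms(2)] length_pos by (metis Suc_diff_1 funpow_Suc_right o_apply)
  then show ?thesis using invariant_funpow[OF assms(1,3)] by metis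
qed

lemma invariant_Diff: "invariant A \<Longrightarrow> invariant (S - A)"
  using invariant_preimage apply_in unfolding invariant_def by blast

lemma invariant_restrict_permutes:
  assumes "invariant A"
  shows "perm_restrict \<sigma> A permutes A"
proof (rule bij_imp_permutes)
  have "inj_on (perm_restrict \<sigma> A) A"
    using permutes_inj[OF permutes_S] by (auto simp: inj_on_def perm_restrict_def dest: injD)
  moreover have "perm_restrict \<sigma> A ` A = A"
  proof
    show "perm_restrict \<sigma> A ` A \<subseteq> A" using assms unfolding invariant_def perm_restrict_def by auto
    show "A \<subseteq> perm_restrict \<sigma> A ` A"
    proof
      fix y assume y: "y \<in> A"
      then have "y = \<sigma> ((\<sigma> ^^ (l - 1)) y)"
        using assms funpow_length length_pos unfolding invariant_def
        by (metis Suc_diff_1 funpow.simps(2) o_apply subsetD)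
      moreover have "(\<sigma> ^^ (l - 1)) y \<in> A" using invariant_funpow[OF assms y] .
      ultimately show "y \<in> perm_restrict \<sigma> A ` A" by (force simp: perm_restrict_def)
    qed
  qed
  ultimately show "bij_betw (perm_restrict \<sigma> A) A A" unfolding bij_betw_def ..
qed (simp add: perm_restrict_def)

lemma cycle_type_Diff_invariant:
  assumes "invariant A" "card S = l * c" "card A = l * a"
  shows "has_cycle_type (perm_restrict \<sigma> (S - A)) (S - A) l (c - a)"
proof -
  let ?\<rho> = "perm_restrict \<sigma> (S - A)"
  have B: "invariant (S - A)" using invariant_Diff[OF assms(1)] .
  have "A \<subseteq> S" using assms(1) invariant_def by auto
  then have card_B: "card (S - A) = l * (c - a)"
    using card_Diff_subset finite_S finite_subset assms(2,3) by (metis diff_mult_distrib2)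
  have orbit_eq: "orbit ?\<rho> x = orbit \<sigma> x" if "x \<in> S - A" for x
    by (rule orbit_cong0[OF that]) (use B in \<open>auto simp: invariant_def perm_restrict_def\<close>)
  have "card (orbit \<sigma> ` (S - A)) = c - a"
    using card_invariant[OF B] card_B length_pos by simp
  moreover have "orbit ?\<rho> ` (S - A) = orbit \<sigma> ` (S - A)" using orbit_eq by simp
  ultimately show ?thesis
    unfolding has_cycle_type_def
    using finite_S invariant_restrict_permutes[OF B] card_B orbit_eq card_orbit by auto
qed

end

section \<open>The cycle of a root through a base point\<close>

locale cycle_roots = uniform_cycles +
  fixes k :: nat and x0 :: 'a
  assumes k_pos: "k > 0" and x0_in: "x0 \<in> S" and odd_length: "odd l"
begin

abbreviation "C0 \<equiv> orbit \<sigma> x0"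

definition return_time :: "('a \<Rightarrow> 'a) \<Rightarrow> nat" where
  "return_time \<tau> = (LEAST n. 0 < n \<and> (\<tau> ^^ n) x0 \<in> C0)"

definition excursion :: "('a \<Rightarrow> 'a) \<Rightarrow> 'a list" where
  "excursion \<tau> = map (\<lambda>i. (\<tau> ^^ i) x0) [1..<return_time \<tau>]"

definition transversals :: "nat \<Rightarrow> 'a list set" where
  "transversals n = {ys. length ys = n \<and> set ys \<subseteq> S - C0 \<and> distinct (map (orbit \<sigma>) ys)}"

definition admissible :: "'a list \<Rightarrow> bool" where
  "admissible ys \<longleftrightarrow> ys \<in> transversals (length ys) \<and> Suc (length ys) \<in> Gset k l"

definition return_exponent :: "nat \<Rightarrow> nat" where
  "return_exponent g = (SOME m. [k div g * m = 1] (mod l))"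

text \<open>If \<open>\<tau>\<close> is a root with \<open>excursion \<tau> = ys\<close> and \<open>g = length ys + 1\<close>, then
  \<open>\<tau>^g x0 = \<sigma>^m x0\<close> for \<open>m = return_exponent g\<close>, hence
  \<open>\<tau>^n x0 = \<sigma>^((n div g) * m) (\<tau>^(n mod g) x0)\<close>; \<open>cycle_point ys n\<close> is this right-hand side.\<close>
definition cycle_point :: "'a list \<Rightarrow> nat \<Rightarrow> 'a" where
  "cycle_point ys n = (\<sigma> ^^ ((n div Suc (length ys)) * return_exponent (Suc (length ys))))
     ((x0 # ys) ! (n mod Suc (length ys)))"

definition cycle_list :: "'a list \<Rightarrow> 'a list" where
  "cycle_list ys = map (cycle_point ys) [0..<Suc (length ys) * l]"

definition root_cycle :: "'a list \<Rightarrow> 'a \<Rightarrow> 'a" where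
  "root_cycle ys = cycle_of_list (cycle_list ys)"

definition rest :: "'a list \<Rightarrow> 'a set" where
  "rest ys = S - set (cycle_list ys)"

lemma return_exponent_inverse:
  assumes "g \<in> Gset k l"
  shows "[k div g * return_exponent g = 1] (mod l)"
proof -
  have "\<exists>m. [k div g * m = 1] (mod l)"
    using assms Gset_iff[OF k_pos] coprime_iff_invertible_nat by auto
  then show ?thesis unfolding return_exponent_def by (rule someI_ex)
qed

lemma in_C0_funpowD: "(\<sigma> ^^ j) z \<in> C0 \<Longrightarrow> z \<in> C0"
  using orbit_funpow orbit_eq_iff by metis

lemma transversal_distinct_orbits:
  assumes "ys \<in> transversals n"
  shows "distinct (map (orbit \<sigma>) (x0 # ys))"
proof -
  have "C0 \<notin> orbit \<sigma> ` set ys"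
    using assms orbit_eq_iff unfolding transversals_def by fastforce
  then show ?thesis using assms unfolding transversals_def by simp
qed

context
  fixes ys assumes admissible: "admissible ys"
begin

lemma admissible_dvd: "Suc (length ys) dvd k"
  using admissible Gset_iff[OF k_pos] unfolding admissible_def by auto

lemma coprime_return_exponent: "coprime (return_exponent (Suc (length ys))) l"
proof -
  let ?g = "Suc (length ys)"
  have "[return_exponent ?g * (k div ?g) = 1] (mod l)"
    using return_exponent_inverse admissible unfolding admissible_def by (simp add: mult.commute)
  then show ?thesis using coprime_iff_invertible_nat by auto
qed

lemma nth_Cons_x0_in: "r < Suc (length ys) \<Longrightarrow> (x0 # ys) ! r \<in> S"
  using admissible x0_in nth_mem unfolding admissible_def transversals_def
  by (cases r) fastforce+

lemma orbit_nth_Cons_x0_inj: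
  assumes "r1 < Suc (length ys)" "r2 < Suc (length ys)"
    and "orbit \<sigma> ((x0 # ys) ! r1) = orbit \<sigma> ((x0 # ys) ! r2)"
  shows "r1 = r2"
proof -
  have "map (orbit \<sigma>) (x0 # ys) ! r1 = map (orbit \<sigma>) (x0 # ys) ! r2"
    using assms by (simp only: nth_map length_Cons)
  moreover have "distinct (map (orbit \<sigma>) (x0 # ys))"
    using admissible transversal_distinct_orbits[of ys "length ys"] unfolding admissible_def by blast
  ultimately show ?thesis
    using nth_eq_iff_index_eq[of "map (orbit \<sigma>) (x0 # ys)" r1 r2] assms(1,2) by simp
qed

lemma cycle_point_in: "cycle_point ys n \<in> S"
  unfolding cycle_point_def by (rule funpow_in, rule nth_Cons_x0_in) simp

lemma orbit_cycle_point: "orbit \<sigma> (cycle_point ys n) = orbit \<sigma> ((x0 # ys) ! (n mod Suc (length ys)))"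
  unfolding cycle_point_def by (rule orbit_funpow)

lemma cycle_point_less: "n < Suc (length ys) \<Longrightarrow> cycle_point ys n = (x0 # ys) ! n"
  unfolding cycle_point_def by simp

lemma cycle_point_mod: "cycle_point ys (n mod (Suc (length ys) * l)) = cycle_point ys n"
proof -
  let ?g = "Suc (length ys)"
  let ?q = "n div ?g" and ?r = "n mod ?g"
  have n: "n mod (?g * l) = ?g * (?q mod l) + ?r" by (rule mod_mult2_eq)
  have r: "?r < ?g" by simp
  have div: "(?g * (?q mod l) + ?r) div ?g = ?q mod l"
    using r by (metis add.commute div_mult_self2 div_less mult.commute add_0 nat.distinct(1))
  have mod: "(?g * (?q mod l) + ?r) mod ?g = ?r"
    using r by (metis add.commute mod_mult_self2 mod_less mult.commute)
  have "((?q mod l) * return_exponent ?g) mod l = (?q * return_exponent ?g) mod l"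
    by (simp add: mod_mult_left_eq)
  then show ?thesis
    unfolding cycle_point_def n div mod using funpow_eq_iff[OF nth_Cons_x0_in[OF r]] by simp
qed

lemma cycle_point_add_k: "cycle_point ys (n + k) = \<sigma> (cycle_point ys n)"
proof -
  let ?g = "Suc (length ys)" let ?m = "return_exponent ?g"
  obtain k' where k: "k = ?g * k'" using admissible_dvd by blast
  let ?q = "n div ?g" and ?y = "(x0 # ys) ! (n mod ?g)"
  have y: "(\<sigma> ^^ (?q * ?m)) ?y \<in> S" by (intro funpow_in nth_Cons_x0_in) simp
  have "k div ?g = k'" using k by (metis nonzero_mult_div_cancel_left Zero_not_Suc)
  moreover have "[k div ?g * ?m = 1] (mod l)"
    using return_exponent_inverse admissible unfolding admissible_def by blast
  ultimately have "(k' * ?m) mod l = 1 mod l" by (simp add: cong_def)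
  then have step: "(\<sigma> ^^ (k' * ?m)) ((\<sigma> ^^ (?q * ?m)) ?y) = \<sigma> ((\<sigma> ^^ (?q * ?m)) ?y)"
    using funpow_eq_iff[OF y, of "k' * ?m" 1] by simp
  have div: "(n + k) div ?g = ?q + k'" by (metis k div_mult_self2 add.commute Zero_not_Suc)
  have mod: "(n + k) mod ?g = n mod ?g" by (metis k mod_mult_self2)
  have "cycle_point ys (n + k) = (\<sigma> ^^ ((?q + k') * ?m)) ?y"
    by (simp only: cycle_point_def div mod)
  also have "\<dots> = (\<sigma> ^^ (k' * ?m)) ((\<sigma> ^^ (?q * ?m)) ?y)"
    by (simp add: add_mult_distrib funpow_add add.commute)
  also have "\<dots> = \<sigma> (cycle_point ys n)" unfolding step cycle_point_def ..
  finally show ?thesis .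
qed

lemma length_cycle_list: "length (cycle_list ys) = Suc (length ys) * l"
  unfolding cycle_list_def by simp

lemma nth_cycle_list: "i < Suc (length ys) * l \<Longrightarrow> cycle_list ys ! i = cycle_point ys i"
  unfolding cycle_list_def by simp

lemma set_cycle_list: "set (cycle_list ys) = range (cycle_point ys)"
proof
  show "set (cycle_list ys) \<subseteq> range (cycle_point ys)" unfolding cycle_list_def by auto
  show "range (cycle_point ys) \<subseteq> set (cycle_list ys)"
  proof
    fix x assume "x \<in> range (cycle_point ys)"
    then obtain n where "x = cycle_point ys n" by blast
    then have "x = cycle_point ys (n mod (Suc (length ys) * l))" using cycle_point_mod by simp
    then show "x \<in> set (cycle_list ys)" unfolding cycle_list_def using length_pos by auto
  qed
qed

lemma distinct_cycle_list: "distinct (cycle_list ys)"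
proof -
  let ?g = "Suc (length ys)"
  have "inj_on (cycle_point ys) {0..<?g * l}"
  proof (rule inj_onI)
    fix a b assume a: "a \<in> {0..<?g * l}" and b: "b \<in> {0..<?g * l}"
      and eq: "cycle_point ys a = cycle_point ys b"
    have "orbit \<sigma> ((x0 # ys) ! (a mod ?g)) = orbit \<sigma> ((x0 # ys) ! (b mod ?g))"
      using orbit_cycle_point eq by metis
    then have r: "a mod ?g = b mod ?g" using orbit_nth_Cons_x0_inj[of "a mod ?g" "b mod ?g"] by simp
    let ?y = "(x0 # ys) ! (a mod ?g)"
    have "(\<sigma> ^^ ((a div ?g) * return_exponent ?g)) ?y = (\<sigma> ^^ ((b div ?g) * return_exponent ?g)) ?y"
      using eq r unfolding cycle_point_def by simp
    then have "[(a div ?g) * return_exponent ?g = (b div ?g) * return_exponent ?g] (mod l)"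
      using funpow_eq_iff[OF nth_Cons_x0_in] by (simp add: cong_def)
    then have "[a div ?g = b div ?g] (mod l)"
      using cong_mult_rcancel_nat[OF coprime_return_exponent] by blast
    moreover have "a div ?g < l" "b div ?g < l"
      using a b by (auto intro!: less_mult_imp_div_less simp: mult.commute)
    ultimately have "a div ?g = b div ?g" by (simp add: cong_def)
    with r show "a = b" by (metis div_mult_mod_eq)
  qed
  then show ?thesis unfolding cycle_list_def by (simp add: distinct_map)
qed

lemma set_cycle_list_subset: "set (cycle_list ys) \<subseteq> S"
  using set_cycle_list cycle_point_in by auto

lemma invariant_cycle_list: "invariant (set (cycle_list ys))"
  unfolding invariant_def using set_cycle_list_subset set_cycle_list
  by (auto simp del: cycle_point_add_k) (metis cycle_point_add_k rangeI)

lemma card_cycle_list: "card (set (cycle_list ys)) = l * Suc (length ys)"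
  using distinct_card[OF distinct_cycle_list] length_cycle_list by simp

lemma root_cycle_permutes: "root_cycle ys permutes set (cycle_list ys)"
  unfolding root_cycle_def by (rule cycle_permutes)

lemma funpow_root_cycle: "(root_cycle ys ^^ n) (cycle_point ys i) = cycle_point ys (i + n)"
proof -
  let ?L = "Suc (length ys) * l"
  let ?i = "i mod ?L"
  have i: "?i < ?L" using length_pos by simp
  have "(root_cycle ys ^^ n) (cycle_point ys i) = (root_cycle ys ^^ n) (cycle_list ys ! ?i)"
    using cycle_point_mod nth_cycle_list[OF i] by simp
  also have "\<dots> = map (root_cycle ys ^^ n) (cycle_list ys) ! ?i" using i length_cycle_list by simp
  also have "\<dots> = rotate n (cycle_list ys) ! ?i"
    unfolding root_cycle_def using cyclic_rotation[OF distinct_cycle_list] by simp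
  also have "\<dots> = cycle_list ys ! ((n + ?i) mod ?L)"
    using nth_rotate[of ?i "cycle_list ys" n] i unfolding length_cycle_list by simp
  also have "\<dots> = cycle_point ys ((n + ?i) mod ?L)" using nth_cycle_list length_pos by simp
  also have "\<dots> = cycle_point ys (i + n)" using cycle_point_mod by (metis add.commute mod_add_right_eq)
  finally show ?thesis .
qed

lemma evenperm_root_cycle: "evenperm (root_cycle ys) \<longleftrightarrow> odd (Suc (length ys))"
proof -
  have "swapidseq_ext (set (cycle_list ys)) (length (cycle_list ys) - 1) (root_cycle ys)"
    unfolding root_cycle_def by (rule swapidseq_ext_of_cycles[OF distinct_cycle_list])
  then have "evenperm (root_cycle ys) = even (length (cycle_list ys) - 1)"
    using swapidseq_ext_imp_swapidseq evenperm_unique by blast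
  also have "\<dots> \<longleftrightarrow> odd (Suc (length ys))"
    using odd_length length_pos length_cycle_list by (auto simp: even_diff_iff)
  finally show ?thesis .
qed

lemma cycle_type_rest:
  assumes "card S = l * c"
  shows "has_cycle_type (perm_restrict \<sigma> (rest ys)) (rest ys) l (c - Suc (length ys))"
  using cycle_type_Diff_invariant[OF invariant_cycle_list assms card_cycle_list]
  unfolding rest_def .

end

context
  fixes \<tau> assumes root: "\<tau> \<in> perm_roots k \<sigma> S"
begin

lemma root_permutes: "\<tau> permutes S" and root_power: "\<tau> ^^ k = \<sigma>"
  using root by (auto simp: perm_roots_def)

lemma root_permutation: "permutation \<tau>"
  using root_permutes finite_S permutation_permutes by blast

lemma funpow_root_commute: "(\<tau> ^^ n) ((\<sigma> ^^ j) x) = (\<sigma> ^^ j) ((\<tau> ^^ n) x)"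
  by (rule funpow_apply_commute) (metis funpow_swap1 root_power)

lemma returns_to_C0: "0 < k \<and> (\<tau> ^^ k) x0 \<in> C0"
  using k_pos root_power funpow_mem_orbit[of 1 x0] by simp

lemma return_time_pos: "0 < return_time \<tau>"
  and funpow_return_time_in_C0: "(\<tau> ^^ return_time \<tau>) x0 \<in> C0"
  using LeastI[of "\<lambda>n. 0 < n \<and> (\<tau> ^^ n) x0 \<in> C0" k, OF returns_to_C0] unfolding return_time_def by auto

lemma before_return_time: "0 < n \<Longrightarrow> n < return_time \<tau> \<Longrightarrow> (\<tau> ^^ n) x0 \<notin> C0"
  using not_less_Least[of n "\<lambda>n. 0 < n \<and> (\<tau> ^^ n) x0 \<in> C0"] unfolding return_time_def by blast

lemma funpow_mult_return:
  assumes "(\<tau> ^^ g) x0 = (\<sigma> ^^ m) x0"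
  shows "(\<tau> ^^ (q * g)) x0 = (\<sigma> ^^ (q * m)) x0"
proof (induction q)
  case (Suc q)
  have "(\<tau> ^^ (Suc q * g)) x0 = (\<tau> ^^ g) ((\<sigma> ^^ (q * m)) x0)"
    using Suc by (simp add: funpow_add)
  also have "\<dots> = (\<sigma> ^^ (q * m)) ((\<tau> ^^ g) x0)" by (rule funpow_root_commute)
  also have "\<dots> = (\<sigma> ^^ (q * m + m)) x0" using assms by (simp add: funpow_add)
  also have "\<dots> = (\<sigma> ^^ (Suc q * m)) x0" by (simp add: add.commute)
  finally show ?case .
qed simp

lemma return_time_dvd: "return_time \<tau> dvd k"
proof -
  let ?g = "return_time \<tau>"
  obtain m where m: "(\<tau> ^^ ?g) x0 = (\<sigma> ^^ m) x0"
    using funpow_return_time_in_C0 in_orbit_iff by blast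
  let ?q = "k div ?g" and ?r = "k mod ?g"
  have "(\<tau> ^^ ?r) ((\<tau> ^^ (?q * ?g)) x0) = (\<tau> ^^ (?r + ?q * ?g)) x0"
    by (simp only: funpow_add o_apply)
  then have "(\<sigma> ^^ (?q * m)) ((\<tau> ^^ ?r) x0) = (\<tau> ^^ k) x0"
    using funpow_mult_return[OF m] funpow_root_commute by (simp add: mod_div_mult_eq)
  then have "(\<tau> ^^ ?r) x0 \<in> C0"
    using returns_to_C0 in_C0_funpowD by metis
  then have "?r = 0" using before_return_time return_time_pos by (metis mod_less_divisor not_gr0)
  then show ?thesis by (simp add: dvd_eq_mod_eq_0)
qed

lemma return_time_Gset: "return_time \<tau> \<in> Gset k l"
  and funpow_return_time: "(\<tau> ^^ return_time \<tau>) x0 = (\<sigma> ^^ return_exponent (return_time \<tau>)) x0"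
proof -
  let ?g = "return_time \<tau>"
  obtain m where m: "(\<tau> ^^ ?g) x0 = (\<sigma> ^^ m) x0"
    using funpow_return_time_in_C0 in_orbit_iff by blast
  let ?q = "k div ?g"
  have "(\<sigma> ^^ (?q * m)) x0 = (\<sigma> ^^ 1) x0"
    using funpow_mult_return[OF m, of ?q] return_time_dvd root_power by simp
  then have "(?q * m) mod l = 1 mod l" using funpow_eq_iff[OF x0_in, of "?q * m" 1] by blast
  then have inverse: "[?q * m = 1] (mod l)" by (simp add: cong_def)
  then have coprime: "coprime ?q l" using coprime_iff_invertible_nat by auto
  then show G: "?g \<in> Gset k l" using Gset_iff[OF k_pos] return_time_dvd return_time_pos by blast
  have "[?q * m = ?q * return_exponent ?g] (mod l)"
    using inverse return_exponent_inverse[OF G] cong_sym cong_trans by blast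
  then have "[m = return_exponent ?g] (mod l)" using cong_mult_lcancel_nat[OF coprime] by blast
  then show "(\<tau> ^^ ?g) x0 = (\<sigma> ^^ return_exponent ?g) x0"
    using m funpow_eq_iff[OF x0_in] by (simp add: cong_def)
qed

lemma excursion_orbits_distinct:
  assumes "0 < a" "a < b" "b < return_time \<tau>"
  shows "orbit \<sigma> ((\<tau> ^^ a) x0) \<noteq> orbit \<sigma> ((\<tau> ^^ b) x0)"
proof
  assume "orbit \<sigma> ((\<tau> ^^ a) x0) = orbit \<sigma> ((\<tau> ^^ b) x0)"
  then obtain j where j: "(\<tau> ^^ b) x0 = (\<sigma> ^^ j) ((\<tau> ^^ a) x0)"
    using orbit_eq_iff in_orbit_iff by metis
  have "(\<tau> ^^ a) ((\<tau> ^^ (b - a)) x0) = (\<tau> ^^ (a + (b - a))) x0" by (simp add: funpow_add)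
  also have "\<dots> = (\<tau> ^^ b) x0" using assms by simp
  also have "\<dots> = (\<tau> ^^ a) ((\<sigma> ^^ j) x0)" using j funpow_root_commute by metis
  finally have "(\<tau> ^^ (b - a)) x0 = (\<sigma> ^^ j) x0"
    using inj_fn[OF permutes_inj[OF root_permutes]] by (simp add: inj_eq)
  then have "(\<tau> ^^ (b - a)) x0 \<in> C0" using funpow_mem_orbit by simp
  moreover have "0 < b - a" "b - a < return_time \<tau>" using assms by auto
  ultimately show False using before_return_time by blast
qed

lemma length_excursion: "Suc (length (excursion \<tau>)) = return_time \<tau>"
  using return_time_pos unfolding excursion_def by simp

lemma excursion_transversal: "excursion \<tau> \<in> transversals (length (excursion \<tau>))"
proof -
  have "set (excursion \<tau>) \<subseteq> S - C0"
    unfolding excursion_def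
    using before_return_time permutes_funpow[OF root_permutes] x0_in
    by (auto simp: permutes_in_image)
  moreover have "inj_on (\<lambda>i. orbit \<sigma> ((\<tau> ^^ i) x0)) {1..<return_time \<tau>}"
    by (rule inj_onI, rule ccontr)
      (metis atLeastLessThan_iff excursion_orbits_distinct linorder_neqE_nat zero_less_one
        less_le_trans)
  then have "distinct (map (orbit \<sigma>) (excursion \<tau>))"
    unfolding excursion_def by (simp add: distinct_map o_def)
  ultimately show ?thesis unfolding transversals_def by blast
qed

lemma admissible_excursion: "admissible (excursion \<tau>)"
  unfolding admissible_def using excursion_transversal length_excursion return_time_Gset by simp

lemma funpow_root_less_return_time: "r < return_time \<tau> \<Longrightarrow> (\<tau> ^^ r) x0 = (x0 # excursion \<tau>) ! r"
  unfolding excursion_def by (cases r) (auto simp: nth_map nth_upt)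

lemma funpow_root_cycle_point: "(\<tau> ^^ n) x0 = cycle_point (excursion \<tau>) n"
proof -
  let ?ys = "excursion \<tau>" let ?g = "return_time \<tau>"
  let ?q = "n div ?g" and ?r = "n mod ?g"
  have r: "(\<tau> ^^ ?r) x0 = (x0 # ?ys) ! ?r"
    using return_time_pos by (intro funpow_root_less_return_time) simp
  have "(\<tau> ^^ n) x0 = (\<tau> ^^ ?r) ((\<tau> ^^ (?q * ?g)) x0)"
    by (metis funpow_add mod_div_mult_eq o_apply)
  also have "\<dots> = (\<sigma> ^^ (?q * return_exponent ?g)) ((\<tau> ^^ ?r) x0)"
    using funpow_mult_return[OF funpow_return_time] funpow_root_commute by metis
  also have "\<dots> = cycle_point ?ys n"
    unfolding cycle_point_def length_excursion r ..
  finally show ?thesis .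
qed

lemma set_cycle_list_excursion: "set (cycle_list (excursion \<tau>)) = orbit \<tau> x0"
  using set_cycle_list[OF admissible_excursion] funpow_root_cycle_point
    orbit_altdef_permutation[OF root_permutation] by auto

lemma cyclic_on_cycle_list_excursion: "cyclic_on \<tau> (set (cycle_list (excursion \<tau>)))"
  unfolding set_cycle_list_excursion by (rule cyclic_on_orbit'[OF root_permutation])

lemma root_restrict_cycle: "perm_restrict \<tau> (set (cycle_list (excursion \<tau>))) = root_cycle (excursion \<tau>)"
proof
  fix x
  let ?ys = "excursion \<tau>"
  show "perm_restrict \<tau> (set (cycle_list ?ys)) x = root_cycle ?ys x"
  proof (cases "x \<in> set (cycle_list ?ys)")
    case True
    then obtain n where x: "x = (\<tau> ^^ n) x0"
      unfolding set_cycle_list_excursion orbit_altdef_permutation[OF root_permutation] by blast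
    then have "\<tau> x = (\<tau> ^^ Suc n) x0" by simp
    also have "\<dots> = (root_cycle ?ys ^^ 1) (cycle_point ?ys n)"
      using funpow_root_cycle[OF admissible_excursion, of 1 n] funpow_root_cycle_point[of "Suc n"]
      by simp
    also have "\<dots> = root_cycle ?ys x"
      using x funpow_root_cycle_point[of n]
      by (simp only: One_nat_def funpow_Suc_right funpow.simps(1) id_comp)
    finally show ?thesis by (simp only: perm_restrict_simps(1)[OF True])
  next
    case False
    have "root_cycle ?ys x = x" unfolding root_cycle_def by (rule id_outside_supp[OF False])
    then show ?thesis by (simp only: perm_restrict_simps(2)[OF False])
  qed
qed

lemma root_decompose: "\<tau> = root_cycle (excursion \<tau>) \<circ> perm_restrict \<tau> (rest (excursion \<tau>))"
proof -
  let ?Z = "set (cycle_list (excursion \<tau>))"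
  have S: "?Z \<union> (S - ?Z) = S" using set_cycle_list_subset[OF admissible_excursion] by blast
  have "\<tau> = perm_restrict \<tau> (?Z \<union> (S - ?Z))" unfolding S perm_restrict_id[OF root_permutes] ..
  also have "\<dots> = perm_restrict \<tau> ?Z \<circ> perm_restrict \<tau> (S - ?Z)"
  proof (rule perm_restrict_union[symmetric])
    show "perm_restrict \<tau> ?Z permutes ?Z"
      unfolding root_restrict_cycle by (rule root_cycle_permutes[OF admissible_excursion])
    show "perm_restrict \<tau> (S - ?Z) permutes (S - ?Z)"
      by (rule perm_restrict_diff_cyclic[OF root_permutes cyclic_on_cycle_list_excursion])
  qed blast
  finally show ?thesis unfolding root_restrict_cycle rest_def .
qed

lemma restrict_root_in_perm_roots:
  "perm_restrict \<tau> (rest (excursion \<tau>)) \<in> perm_roots k (perm_restrict \<sigma> (rest (excursion \<tau>))) (rest (excursion \<tau>))"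
proof -
  let ?R = "rest (excursion \<tau>)"
  have permutes: "perm_restrict \<tau> ?R permutes ?R"
    unfolding rest_def
    by (rule perm_restrict_diff_cyclic[OF root_permutes cyclic_on_cycle_list_excursion])
  have "\<tau> x \<in> ?R" if "x \<in> ?R" for x
    using permutes_in_image[OF permutes] that perm_restrict_simps(1)[OF that] by metis
  then have "perm_restrict \<tau> ?R ^^ k = perm_restrict (\<tau> ^^ k) ?R" by (rule funpow_perm_restrict)
  with permutes show ?thesis unfolding root_power perm_roots_def by simp
qed

end

context
  fixes ys \<tau>'
  assumes admissible: "admissible ys"
    and rest_root: "\<tau>' \<in> perm_roots k (perm_restrict \<sigma> (rest ys)) (rest ys)"
begin

lemma rest_root_permutes: "\<tau>' permutes rest ys"
  and rest_root_power: "\<tau>' ^^ k = perm_restrict \<sigma> (rest ys)"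
  using rest_root by (auto simp: perm_roots_def)

lemma glue_permutes: "root_cycle ys \<circ> \<tau>' permutes S"
proof (rule permutes_compose)
  show "\<tau>' permutes S" using permutes_subset[OF rest_root_permutes] unfolding rest_def by blast
  show "root_cycle ys permutes S"
    using permutes_subset[OF root_cycle_permutes set_cycle_list_subset, OF admissible admissible] .
qed

lemma glue_on_cycle: "x \<in> set (cycle_list ys) \<Longrightarrow> (root_cycle ys \<circ> \<tau>') x = root_cycle ys x"
  using permutes_not_in[OF rest_root_permutes] unfolding rest_def by simp

lemma glue_on_rest: "x \<in> rest ys \<Longrightarrow> (root_cycle ys \<circ> \<tau>') x = \<tau>' x"
proof -
  assume "x \<in> rest ys"
  then have "\<tau>' x \<in> rest ys" using permutes_in_image[OF rest_root_permutes] by simp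
  then have "\<tau>' x \<notin> set (cycle_list ys)" unfolding rest_def by simp
  then show ?thesis unfolding root_cycle_def by (simp add: id_outside_supp)
qed

lemma funpow_glue_on_cycle:
  assumes "x \<in> set (cycle_list ys)"
  shows "((root_cycle ys \<circ> \<tau>') ^^ n) x = (root_cycle ys ^^ n) x"
proof -
  have "(root_cycle ys \<circ> \<tau>') y \<in> set (cycle_list ys)" if "y \<in> set (cycle_list ys)" for y
    using glue_on_cycle[OF that] permutes_in_image[OF root_cycle_permutes[OF admissible]] that
    by simp
  from this glue_on_cycle assms show ?thesis by (rule funpow_eq_on_invariant[THEN conjunct1])
qed

lemma funpow_glue_on_rest: "x \<in> rest ys \<Longrightarrow> ((root_cycle ys \<circ> \<tau>') ^^ n) x = (\<tau>' ^^ n) x"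
  using funpow_eq_on_invariant[of "rest ys" "root_cycle ys \<circ> \<tau>'" "\<tau>'" x n]
    glue_on_rest permutes_in_image[OF rest_root_permutes] by simp

lemma glue_root: "root_cycle ys \<circ> \<tau>' \<in> perm_roots k \<sigma> S"
proof -
  have "((root_cycle ys \<circ> \<tau>') ^^ k) x = \<sigma> x" for x
  proof (cases "x \<in> set (cycle_list ys)")
    case True
    then obtain i where i: "x = cycle_point ys i" using set_cycle_list[OF admissible] by auto
    have "((root_cycle ys \<circ> \<tau>') ^^ k) x = (root_cycle ys ^^ k) (cycle_point ys i)"
      using funpow_glue_on_cycle[OF True] i by simp
    also have "\<dots> = \<sigma> x" using funpow_root_cycle cycle_point_add_k admissible i by simp
    finally show ?thesis .
  next
    case False
    show ?thesis
    proof (cases "x \<in> S")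
      case True
      then have "x \<in> rest ys" using False unfolding rest_def by simp
      then show ?thesis using funpow_glue_on_rest rest_root_power by (simp add: perm_restrict_def)
    next
      case outside: False
      then show ?thesis
        using permutes_funpow[OF glue_permutes, of k] permutes_not_in apply_outside by metis
    qed
  qed
  then show ?thesis using glue_permutes unfolding perm_roots_def by auto
qed

lemma glue_cycle_point: "((root_cycle ys \<circ> \<tau>') ^^ n) x0 = cycle_point ys n"
proof -
  have "x0 = cycle_point ys 0" unfolding cycle_point_def by simp
  then have "x0 \<in> set (cycle_list ys)" using set_cycle_list[OF admissible] by simp
  then show ?thesis
    using funpow_glue_on_cycle funpow_root_cycle[OF admissible, of n 0] \<open>x0 = cycle_point ys 0\<close>
    by simp
qed

lemma glue_return_time: "return_time (root_cycle ys \<circ> \<tau>') = Suc (length ys)"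
  unfolding return_time_def
proof (rule Least_equality)
  have "cycle_point ys (Suc (length ys)) = (\<sigma> ^^ return_exponent (Suc (length ys))) x0"
    unfolding cycle_point_def by simp
  then have "((root_cycle ys \<circ> \<tau>') ^^ Suc (length ys)) x0 = (\<sigma> ^^ return_exponent (Suc (length ys))) x0"
    by (simp only: glue_cycle_point)
  then show "0 < Suc (length ys) \<and> ((root_cycle ys \<circ> \<tau>') ^^ Suc (length ys)) x0 \<in> C0"
    using funpow_mem_orbit by simp
next
  fix n assume n: "0 < n \<and> ((root_cycle ys \<circ> \<tau>') ^^ n) x0 \<in> C0"
  show "Suc (length ys) \<le> n"
  proof (rule ccontr)
    assume "\<not> Suc (length ys) \<le> n"
    then have "((root_cycle ys \<circ> \<tau>') ^^ n) x0 = (x0 # ys) ! n"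
      unfolding glue_cycle_point by (intro cycle_point_less[OF admissible]) simp
    also have "\<dots> = ys ! (n - 1)" using n by (cases n) auto
    finally have "((root_cycle ys \<circ> \<tau>') ^^ n) x0 = ys ! (n - 1)" .
    moreover have "ys ! (n - 1) \<in> set ys" using \<open>\<not> Suc (length ys) \<le> n\<close> n by auto
    ultimately show False
      using n admissible unfolding admissible_def transversals_def by auto
  qed
qed

lemma glue_excursion: "excursion (root_cycle ys \<circ> \<tau>') = ys"
proof (rule nth_equalityI)
  show length: "length (excursion (root_cycle ys \<circ> \<tau>')) = length ys"
    unfolding excursion_def glue_return_time by (simp del: upt_Suc)
  fix i assume "i < length (excursion (root_cycle ys \<circ> \<tau>'))"
  then have i: "i < length ys" unfolding length .
  have "excursion (root_cycle ys \<circ> \<tau>') ! i = ((root_cycle ys \<circ> \<tau>') ^^ Suc i) x0"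
    unfolding excursion_def glue_return_time using i by (simp del: funpow.simps upt_Suc)
  also have "\<dots> = ys ! i"
    unfolding glue_cycle_point using cycle_point_less[OF admissible, of "Suc i"] i by simp
  finally show "excursion (root_cycle ys \<circ> \<tau>') ! i = ys ! i" .
qed

lemma evenperm_glue: "evenperm (root_cycle ys \<circ> \<tau>') \<longleftrightarrow> (odd (Suc (length ys)) \<longleftrightarrow> evenperm \<tau>')"
proof -
  have "permutation \<tau>'"
    using rest_root_permutes finite_S permutation_permutes unfolding rest_def by blast
  then show ?thesis
    using evenperm_comp[OF permutation_of_cycle] evenperm_root_cycle[OF admissible]
    unfolding root_cycle_def by blast
qed

end

section \<open>The counting recurrence\<close>

text \<open>The bijection is \<open>\<tau>' \<mapsto> root_cycle ys \<circ> \<tau>'\<close>, inverted by \<open>root_decompose\<close>.\<close>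
lemma card_roots_with_excursion:
  assumes admissible: "admissible ys"
  shows "card {\<tau> \<in> perm_roots k \<sigma> S. excursion \<tau> = ys \<and> evenperm \<tau> = s}
       = card {\<tau>' \<in> perm_roots k (perm_restrict \<sigma> (rest ys)) (rest ys).
                 evenperm \<tau>' = (odd (Suc (length ys)) = s)}"
    (is "card ?A = card ?B")
proof -
  have "?A = (\<lambda>\<tau>'. root_cycle ys \<circ> \<tau>') ` ?B"
  proof
    show "?A \<subseteq> (\<lambda>\<tau>'. root_cycle ys \<circ> \<tau>') ` ?B"
    proof
      fix \<tau> assume "\<tau> \<in> ?A"
      then have root: "\<tau> \<in> perm_roots k \<sigma> S" and ys: "excursion \<tau> = ys" and "evenperm \<tau> = s"
        by auto
      let ?\<tau>' = "perm_restrict \<tau> (rest ys)"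
      have \<tau>': "?\<tau>' \<in> perm_roots k (perm_restrict \<sigma> (rest ys)) (rest ys)"
        using restrict_root_in_perm_roots[OF root] ys by simp
      have \<tau>: "\<tau> = root_cycle ys \<circ> ?\<tau>'" using root_decompose[OF root] ys by simp
      then have "evenperm ?\<tau>' = (odd (Suc (length ys)) = s)"
        using evenperm_glue[OF admissible \<tau>'] \<open>evenperm \<tau> = s\<close> by auto
      with \<tau> \<tau>' show "\<tau> \<in> (\<lambda>\<tau>'. root_cycle ys \<circ> \<tau>') ` ?B" by blast
    qed
    show "(\<lambda>\<tau>'. root_cycle ys \<circ> \<tau>') ` ?B \<subseteq> ?A"
      using glue_root[OF admissible] glue_excursion[OF admissible] evenperm_glue[OF admissible]
      by auto
  qed
  moreover have "inj_on (\<lambda>\<tau>'. root_cycle ys \<circ> \<tau>') ?B"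
  proof (rule inj_onI)
    fix a b assume "root_cycle ys \<circ> a = root_cycle ys \<circ> b"
    then show "a = b"
      using permutes_inj[OF root_cycle_permutes[OF admissible]] by (auto simp: fun_eq_iff inj_eq)
  qed
  ultimately show ?thesis by (simp add: card_image)
qed

lemma finite_admissible: "finite {ys. admissible ys}"
proof -
  have "{ys. admissible ys} \<subseteq> {xs. set xs \<subseteq> S \<and> length xs \<le> k}"
    using Gset_subset_atLeastAtMost[OF k_pos, of l]
    unfolding admissible_def transversals_def by fastforce
  then show ?thesis using finite_lists_length_le[OF finite_S] finite_subset by blast
qed

lemma card_roots_sum_excursions:
  "card {\<tau> \<in> perm_roots k \<sigma> S. evenperm \<tau> = s}
   = (\<Sum>ys | admissible ys. card {\<tau> \<in> perm_roots k \<sigma> S. excursion \<tau> = ys \<and> evenperm \<tau> = s})"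
proof -
  have "{\<tau> \<in> perm_roots k \<sigma> S. evenperm \<tau> = s}
      = (\<Union>ys\<in>{ys. admissible ys}. {\<tau> \<in> perm_roots k \<sigma> S. excursion \<tau> = ys \<and> evenperm \<tau> = s})"
    using admissible_excursion by blast
  then show ?thesis
    using finite_perm_roots[OF finite_S]
    by (simp only:) (rule card_UN_disjoint[OF finite_admissible], auto)
qed

end

definition transversal_count :: "nat \<Rightarrow> nat \<Rightarrow> nat \<Rightarrow> nat" where
  "transversal_count l c n = l ^ n * (\<Prod>i<n. c - 1 - i)"

context cycle_roots
begin

definition cycles_union :: "'a list \<Rightarrow> 'a set" where
  "cycles_union ys = \<Union> (orbit \<sigma> ` set (x0 # ys))"

lemma mem_cycles_union: "x \<in> cycles_union ys \<longleftrightarrow> x \<in> C0 \<or> (\<exists>y\<in>set ys. orbit \<sigma> x = orbit \<sigma> y)"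
  unfolding cycles_union_def using orbit_eq_iff by auto

lemma transversals_subset: "ys \<in> transversals n \<Longrightarrow> set ys \<subseteq> S"
  unfolding transversals_def by auto

lemma invariant_cycles_union:
  assumes "set ys \<subseteq> S"
  shows "invariant (cycles_union ys)"
proof -
  have "cycles_union ys \<subseteq> S" unfolding cycles_union_def using orbit_subset_S x0_in assms by auto
  moreover have "\<sigma> z \<in> cycles_union ys" if "z \<in> cycles_union ys" for z
  proof -
    from that obtain y where y: "y \<in> set (x0 # ys)" "z \<in> orbit \<sigma> y"
      unfolding cycles_union_def by blast
    then obtain i where "z = (\<sigma> ^^ i) y" using in_orbit_iff by blast
    then have "\<sigma> z = (\<sigma> ^^ Suc i) y" by simp
    then have "\<sigma> z \<in> orbit \<sigma> y" using funpow_mem_orbit by metis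
    with y show ?thesis unfolding cycles_union_def by blast
  qed
  ultimately show ?thesis unfolding invariant_def by blast
qed

lemma card_cycles_union:
  assumes ys: "ys \<in> transversals n"
  shows "card (cycles_union ys) = l * Suc n"
proof -
  have "orbit \<sigma> ` cycles_union ys = orbit \<sigma> ` set (x0 # ys)"
    unfolding cycles_union_def using same_orbit self_in_orbit by blast
  moreover have "card (orbit \<sigma> ` set (x0 # ys)) = Suc n"
    using distinct_card[OF transversal_distinct_orbits[OF ys]] ys
    unfolding transversals_def by simp
  ultimately show ?thesis
    using card_invariant[OF invariant_cycles_union[OF transversals_subset[OF ys]]] by simp
qed

lemma transversals_Suc:
  "transversals (Suc n) = (\<Union>ys\<in>transversals n. (\<lambda>x. x # ys) ` (S - cycles_union ys))"
proof
  show "transversals (Suc n) \<subseteq> (\<Union>ys\<in>transversals n. (\<lambda>x. x # ys) ` (S - cycles_union ys))"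
  proof
    fix xs assume "xs \<in> transversals (Suc n)"
    then obtain x ys where xs: "xs = x # ys" and ys: "ys \<in> transversals n"
      and x: "x \<in> S - C0" "orbit \<sigma> x \<notin> orbit \<sigma> ` set ys"
      unfolding transversals_def by (auto simp: length_Suc_conv)
    then have "x \<in> S - cycles_union ys" using mem_cycles_union by auto
    with xs ys show "xs \<in> (\<Union>ys\<in>transversals n. (\<lambda>x. x # ys) ` (S - cycles_union ys))" by blast
  qed
  show "(\<Union>ys\<in>transversals n. (\<lambda>x. x # ys) ` (S - cycles_union ys)) \<subseteq> transversals (Suc n)"
    using mem_cycles_union unfolding transversals_def by fastforce
qed

lemma finite_transversals: "finite (transversals n)"
proof -
  have "transversals n \<subseteq> {xs. set xs \<subseteq> S \<and> length xs \<le> n}" unfolding transversals_def by auto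
  then show ?thesis using finite_lists_length_le[OF finite_S] finite_subset by blast
qed

lemma card_transversals:
  assumes card_S: "card S = l * c"
  shows "card (transversals n) = transversal_count l c n"
proof (induction n)
  case 0
  have "transversals 0 = {[]}" unfolding transversals_def by auto
  then show ?case by (simp add: transversal_count_def)
next
  case (Suc n)
  have "card (transversals (Suc n)) = (\<Sum>ys\<in>transversals n. card ((\<lambda>x. x # ys) ` (S - cycles_union ys)))"
    unfolding transversals_Suc using finite_S
    by (intro card_UN_disjoint[OF finite_transversals]) auto
  also have "\<dots> = (\<Sum>ys\<in>transversals n. l * (c - Suc n))"
  proof (rule sum.cong[OF refl])
    fix ys assume ys: "ys \<in> transversals n"
    have "cycles_union ys \<subseteq> S"
      using invariant_cycles_union[OF transversals_subset[OF ys]] unfolding invariant_def ..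
    then have "card (S - cycles_union ys) = card S - card (cycles_union ys)"
      using finite_S by (intro card_Diff_subset) (auto intro: finite_subset)
    then show "card ((\<lambda>x. x # ys) ` (S - cycles_union ys)) = l * (c - Suc n)"
      using card_S card_cycles_union[OF ys]
      by (simp add: card_image inj_on_def diff_mult_distrib2)
  qed
  also have "\<dots> = transversal_count l c (Suc n)"
    using Suc by (simp add: transversal_count_def algebra_simps)
  finally show ?case .
qed

lemma admissible_of_length:
  assumes "g \<in> Gset k l"
  shows "{ys. admissible ys \<and> Suc (length ys) = g} = transversals (g - 1)"
  using assms Gset_iff[OF k_pos, of g] unfolding admissible_def transversals_def by auto

lemma card_roots_recurrence:
  assumes card_S: "card S = l * c"
    and IH: "\<And>m (\<sigma>' :: 'a \<Rightarrow> 'a) S' s'. m < c \<Longrightarrow> has_cycle_type \<sigma>' S' l m \<Longrightarrow>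
        real (card {\<tau> \<in> perm_roots k \<sigma>' S'. evenperm \<tau> = s'}) = f s' m"
  shows "real (card {\<tau> \<in> perm_roots k \<sigma> S. evenperm \<tau> = s})
       = (\<Sum>g\<in>Gset k l. real (transversal_count l c (g - 1)) * f (odd g = s) (c - g))"
proof -
  have "c > 0" using card_S finite_S x0_in card_gt_0_iff by fastforce
  have "real (card {\<tau> \<in> perm_roots k \<sigma> S. evenperm \<tau> = s})
      = (\<Sum>ys | admissible ys. f (odd (Suc (length ys)) = s) (c - Suc (length ys)))"
    unfolding card_roots_sum_excursions of_nat_sum
    using card_roots_with_excursion IH[OF _ cycle_type_rest[OF _ card_S]] \<open>c > 0\<close>
    by (intro sum.cong) auto
  also have "\<dots> = (\<Sum>g\<in>Gset k l. \<Sum>ys\<in>{ys \<in> {ys. admissible ys}. Suc (length ys) = g}.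
                     f (odd (Suc (length ys)) = s) (c - Suc (length ys)))"
    by (rule sum.group[symmetric, OF finite_admissible finite_Gset[OF k_pos]])
      (auto simp: admissible_def)
  also have "\<dots> = (\<Sum>g\<in>Gset k l. \<Sum>ys\<in>transversals (g - 1). f (odd g = s) (c - g))"
  proof (rule sum.cong[OF refl])
    fix g assume g: "g \<in> Gset k l"
    then have "g > 0" using Gset_iff[OF k_pos] by blast
    have "{ys \<in> {ys. admissible ys}. Suc (length ys) = g} = transversals (g - 1)"
      using admissible_of_length[OF g] by simp
    then show "(\<Sum>ys\<in>{ys \<in> {ys. admissible ys}. Suc (length ys) = g}.
                 f (odd (Suc (length ys)) = s) (c - Suc (length ys)))
             = (\<Sum>ys\<in>transversals (g - 1). f (odd g = s) (c - g))"
      using \<open>g > 0\<close> by (auto simp: transversals_def intro!: sum.cong)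
  qed
  also have "\<dots> = (\<Sum>g\<in>Gset k l. real (transversal_count l c (g - 1)) * f (odd g = s) (c - g))"
    using card_transversals[OF card_S] by simp
  finally show ?thesis .
qed

end

section \<open>Exponential generating functions\<close>

definition cycle_series :: "nat set \<Rightarrow> nat \<Rightarrow> real fps" where
  "cycle_series A l = (\<Sum>g\<in>A. fps_const (real l ^ (g - 1) / real g) * fps_X ^ g)"

definition roots_egf :: "bool \<Rightarrow> nat \<Rightarrow> nat \<Rightarrow> real fps" where
  "roots_egf s k l = (fps_exp 1 oo cycle_series (GOset k l) l) *
     ((if s then fps_cosh 1 else fps_sinh 1) oo cycle_series (GEset k l) l)"

lemma fps_nth_cycle_series:
  assumes "finite A"
  shows "fps_nth (cycle_series A l) n = (if n \<in> A then real l ^ (n - 1) / real n else 0)"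
proof -
  have "fps_nth (cycle_series A l) n = (\<Sum>g\<in>A. if n = g then real l ^ (g - 1) / real g else 0)"
    unfolding cycle_series_def fps_sum_nth by (rule sum.cong) (auto simp: fps_X_power_nth)
  also have "\<dots> = (if n \<in> A then real l ^ (n - 1) / real n else 0)"
    using assms by (simp add: sum.delta)
  finally show ?thesis .
qed

lemma fps_nth_deriv_cycle_series:
  assumes "finite A"
  shows "fps_nth (fps_deriv (cycle_series A l)) i = (if Suc i \<in> A then real l ^ i else 0)"
  unfolding fps_deriv_nth fps_nth_cycle_series[OF assms] by (simp del: of_nat_Suc)

lemma of_nat_Suc_times_power_div_fact:
  "of_nat (Suc n) * c ^ Suc n / fact (Suc n) = c * c ^ n / (fact n :: 'a :: field_char_0)"
  by (simp add: fact_Suc del: of_nat_Suc)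

lemma fps_deriv_fps_cosh: "fps_deriv (fps_cosh c) = fps_const c * fps_sinh (c :: 'a :: field_char_0)"
  by (rule fps_ext) (simp add: fps_deriv_nth fps_cosh_def fps_sinh_def of_nat_Suc_times_power_div_fact
    del: of_nat_Suc power_Suc fact_Suc)

lemma fps_deriv_fps_sinh: "fps_deriv (fps_sinh c) = fps_const c * fps_cosh (c :: 'a :: field_char_0)"
  by (rule fps_ext) (simp add: fps_deriv_nth fps_cosh_def fps_sinh_def of_nat_Suc_times_power_div_fact
    del: of_nat_Suc power_Suc fact_Suc)

lemma
  fixes P Q :: "'a :: field_char_0 fps"
  assumes "fps_nth P 0 = 0" and "fps_nth Q 0 = 0"
  shows fps_deriv_exp_cosh_compose: "fps_deriv ((fps_exp 1 oo P) * (fps_cosh 1 oo Q))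
      = fps_deriv P * ((fps_exp 1 oo P) * (fps_cosh 1 oo Q)) + fps_deriv Q * ((fps_exp 1 oo P) * (fps_sinh 1 oo Q))"
    and fps_deriv_exp_sinh_compose: "fps_deriv ((fps_exp 1 oo P) * (fps_sinh 1 oo Q))
      = fps_deriv P * ((fps_exp 1 oo P) * (fps_sinh 1 oo Q)) + fps_deriv Q * ((fps_exp 1 oo P) * (fps_cosh 1 oo Q))"
  using fps_compose_deriv[OF assms(1), of "fps_exp 1"] fps_compose_deriv[OF assms(2), of "fps_cosh 1"]
    fps_compose_deriv[OF assms(2), of "fps_sinh 1"]
  by (simp_all add: fps_deriv_mult fps_exp_deriv fps_deriv_fps_cosh fps_deriv_fps_sinh algebra_simps)

lemma fps_nth_roots_egf_0: "fps_nth (roots_egf s k l) 0 = (if s then 1 else 0)"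
  unfolding roots_egf_def by (simp add: fps_compose_nth fps_cosh_def fps_sinh_def)

lemma fps_deriv_roots_egf:
  assumes "k > 0"
  shows "fps_deriv (roots_egf s k l) = fps_deriv (cycle_series (GOset k l) l) * roots_egf s k l
           + fps_deriv (cycle_series (GEset k l) l) * roots_egf (\<not> s) k l"
proof -
  have "0 \<notin> GOset k l" "0 \<notin> GEset k l"
    using Gset_iff[OF assms] unfolding GOset_def GEset_def by auto
  then have "fps_nth (cycle_series (GOset k l) l) 0 = 0" "fps_nth (cycle_series (GEset k l) l) 0 = 0"
    by (simp_all add: fps_nth_cycle_series finite_GOset[OF assms] finite_GEset[OF assms])
  then show ?thesis
    unfolding roots_egf_def
    using fps_deriv_exp_cosh_compose fps_deriv_exp_sinh_compose by (cases s) auto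
qed

lemma roots_egf_coeff_recurrence:
  assumes "k > 0"
  shows "real (Suc N) * fps_nth (roots_egf s k l) (Suc N)
    = (\<Sum>i=0..N. if Suc i \<in> Gset k l then real l ^ i * fps_nth (roots_egf (odd (Suc i) = s) k l) (N - i) else 0)"
proof -
  have "real (Suc N) * fps_nth (roots_egf s k l) (Suc N) = fps_nth (fps_deriv (roots_egf s k l)) N"
    by (simp add: fps_deriv_nth)
  also have "\<dots> = (\<Sum>i=0..N. fps_nth (fps_deriv (cycle_series (GOset k l) l)) i * fps_nth (roots_egf s k l) (N - i)
      + fps_nth (fps_deriv (cycle_series (GEset k l) l)) i * fps_nth (roots_egf (\<not> s) k l) (N - i))"
    unfolding fps_deriv_roots_egf[OF assms] by (simp add: fps_mult_nth sum.distrib)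
  also have "\<dots> = (\<Sum>i=0..N. if Suc i \<in> Gset k l
                   then real l ^ i * fps_nth (roots_egf (odd (Suc i) = s) k l) (N - i) else 0)"
    unfolding fps_nth_deriv_cycle_series[OF finite_GOset[OF assms]]
      fps_nth_deriv_cycle_series[OF finite_GEset[OF assms]]
    by (intro sum.cong refl) (auto simp: GOset_def GEset_def)
  finally show ?thesis .
qed

lemma fact_eq_prod_times_fact: "i \<le> N \<Longrightarrow> fact N = (\<Prod>j<i. N - j) * fact (N - i)"
proof (induction i)
  case (Suc i)
  then have "fact (N - i) = (N - i) * fact (N - Suc i)"
    by (metis Suc_diff_Suc fact_Suc le_eq_less_or_eq less_eq_Suc_le not_less_eq_eq of_nat_id)
  with Suc show ?case by (simp add: algebra_simps)
qed simp

lemma sum_Gset_as_sum_upto: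
  fixes h :: "nat \<Rightarrow> real"
  assumes "finite G" "0 \<notin> G" "\<And>g. g \<in> G \<Longrightarrow> g > Suc N \<Longrightarrow> h g = 0"
  shows "(\<Sum>g\<in>G. h g) = (\<Sum>i=0..N. if Suc i \<in> G then h (Suc i) else 0)"
proof -
  have "(\<Sum>i=0..N. if Suc i \<in> G then h (Suc i) else 0) = (\<Sum>i\<in>{i\<in>{0..N}. Suc i \<in> G}. h (Suc i))"
    by (rule sum.inter_filter[symmetric]) simp
  also have "\<dots> = (\<Sum>g\<in>Suc ` {i\<in>{0..N}. Suc i \<in> G}. h g)"
    by (simp add: sum.reindex)
  also have "Suc ` {i\<in>{0..N}. Suc i \<in> G} = G \<inter> {1..Suc N}"
  proof
    show "G \<inter> {1..Suc N} \<subseteq> Suc ` {i \<in> {0..N}. Suc i \<in> G}"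
    proof
      fix g assume "g \<in> G \<inter> {1..Suc N}"
      then show "g \<in> Suc ` {i \<in> {0..N}. Suc i \<in> G}" by (auto intro!: image_eqI[of _ _ "g - 1"])
    qed
  qed auto
  also have "(\<Sum>g\<in>G \<inter> {1..Suc N}. h g) = (\<Sum>g\<in>G. h g)"
  proof (rule sum.mono_neutral_left[OF assms(1)])
    show "\<forall>g\<in>G - G \<inter> {1..Suc N}. h g = 0"
    proof
      fix g assume "g \<in> G - G \<inter> {1..Suc N}"
      then have "g \<in> G" "g > Suc N" using assms(2) by (auto simp: not_le Suc_le_eq gr0I)
      then show "h g = 0" using assms(3) by blast
    qed
  qed blast
  finally show ?thesis by simp
qed

lemma roots_egf_recurrence:
  assumes "k > 0"
  shows "fact (Suc N) * fps_nth (roots_egf s k l) (Suc N)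
     = (\<Sum>g\<in>Gset k l. real (transversal_count l (Suc N) (g - 1)) *
          (fact (Suc N - g) * fps_nth (roots_egf (odd g = s) k l) (Suc N - g)))"
    (is "_ = (\<Sum>g\<in>Gset k l. ?h g)")
proof -
  have "fact (Suc N) * fps_nth (roots_egf s k l) (Suc N)
      = fact N * (real (Suc N) * fps_nth (roots_egf s k l) (Suc N))"
    by (simp add: fact_Suc del: of_nat_Suc)
  also have "\<dots> = (\<Sum>i=0..N. if Suc i \<in> Gset k l then ?h (Suc i) else 0)"
    unfolding roots_egf_coeff_recurrence[OF assms] sum_distrib_left
  proof (intro sum.cong refl)
    fix i assume "i \<in> {0..N}"
    then have "(fact N :: real) = real (\<Prod>j<i. N - j) * fact (N - i)"
      using fact_eq_prod_times_fact[of i N] by (metis atLeastAtMost_iff of_nat_fact of_nat_mult)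
    then show "fact N * (if Suc i \<in> Gset k l then real l ^ i * fps_nth (roots_egf (odd (Suc i) = s) k l) (N - i) else 0)
        = (if Suc i \<in> Gset k l then ?h (Suc i) else 0)"
      by (simp add: transversal_count_def)
  qed
  also have "\<dots> = (\<Sum>g\<in>Gset k l. ?h g)"
  proof (rule sum_Gset_as_sum_upto[symmetric, OF finite_Gset[OF assms]])
    show "0 \<notin> Gset k l" using Gset_iff[OF assms] by blast
    fix g assume "g > Suc N"
    then have "N \<in> {..<g - 1}" by simp
    then have "(\<Prod>i<g - 1. Suc N - 1 - i) = 0" by (intro prod_zero) auto
    then show "?h g = 0" unfolding transversal_count_def by simp
  qed
  finally show ?thesis .
qed

lemma card_roots_eq_roots_egf:
  fixes \<sigma> :: "'a \<Rightarrow> 'a"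
  assumes "k > 0" and "odd l" and "has_cycle_type \<sigma> S l c"
  shows "real (card {\<tau> \<in> perm_roots k \<sigma> S. evenperm \<tau> = s}) = fact c * fps_nth (roots_egf s k l) c"
  using assms(3)
proof (induction c arbitrary: \<sigma> S s rule: less_induct)
  case (less c)
  then have finite: "finite S" and permutes: "\<sigma> permutes S" and card_S: "card S = l * c"
    and card_orbit: "\<And>x. x \<in> S \<Longrightarrow> card (orbit \<sigma> x) = l"
    unfolding has_cycle_type_def by auto
  have "l > 0" using \<open>odd l\<close> by (cases l) auto
  show ?case
  proof (cases c)
    case 0
    then have "S = {}" "\<sigma> = id" using finite card_S \<open>l > 0\<close> permutes by auto
    then have "perm_roots k \<sigma> S = {id}" unfolding perm_roots_def by auto
    then have "{\<tau> \<in> perm_roots k \<sigma> S. evenperm \<tau> = s} = (if s then {id} else {})" by auto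
    then show ?thesis using 0 fps_nth_roots_egf_0 by simp
  next
    case (Suc N)
    then obtain x0 where "x0 \<in> S" using card_S \<open>l > 0\<close> by fastforce
    then interpret cycle_roots \<sigma> S l k x0
      by unfold_locales (use finite permutes card_orbit assms(1,2) \<open>l > 0\<close> in auto)
    show ?thesis
      using card_roots_recurrence[OF card_S less.IH] roots_egf_recurrence[OF assms(1)] Suc
      by simp
  qed
qed

lemma egf_eqI: "(\<And>c. real (a c) = fact c * fps_nth E c) \<Longrightarrow> egf a = E"
  by (rule fps_ext) (simp add: egf_def)

lemma egf_roots:
  fixes \<sigma> :: "nat \<Rightarrow> 'a \<Rightarrow> 'a"
  assumes "k > 0" and "odd l" and "\<And>c. has_cycle_type (\<sigma> c) (S c) l c"
  shows "egf (\<lambda>c. re_roots k (\<sigma> c) (S c)) = roots_egf True k l"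
    and "egf (\<lambda>c. ro_roots k (\<sigma> c) (S c)) = roots_egf False k l"
proof -
  have even: "re_roots k \<sigma>' S' = card {\<tau> \<in> perm_roots k \<sigma>' S'. evenperm \<tau> = True}"
    and odd: "ro_roots k \<sigma>' S' = card {\<tau> \<in> perm_roots k \<sigma>' S'. evenperm \<tau> = False}"
    for \<sigma>' :: "'a \<Rightarrow> 'a" and S'
    unfolding re_roots_def ro_roots_def perm_roots_def by (auto intro: arg_cong[where f = card])
  show "egf (\<lambda>c. re_roots k (\<sigma> c) (S c)) = roots_egf True k l"
    by (rule egf_eqI) (simp only: even card_roots_eq_roots_egf[OF assms])
  show "egf (\<lambda>c. ro_roots k (\<sigma> c) (S c)) = roots_egf False k l"
    by (rule egf_eqI) (simp only: odd card_roots_eq_roots_egf[OF assms])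
qed

lemma has_cycle_type_id:
  assumes "finite T" and "card T = c"
  shows "has_cycle_type id T 1 c"
proof -
  have orbit: "orbit id x = {x}" for x :: 'a
    using orbit_eq_singleton_iff[of id x] by simp
  then have "card (orbit id ` T) = card T" by (simp add: card_image)
  then show ?thesis unfolding has_cycle_type_def using assms orbit by (auto simp: permutes_id)
qed

theorem mainTheorem8:
  fixes k l :: nat
    and S :: "nat \<Rightarrow> 'a set" and \<sigma> :: "nat \<Rightarrow> 'a \<Rightarrow> 'a"
    and T :: "nat \<Rightarrow> 'b set"
  assumes "k > 0" and "even k" and "odd l"
    and "\<And>c. has_cycle_type (\<sigma> c) (S c) l c"
    and "\<And>c. finite (T c) \<and> card (T c) = c"
  shows
   "egf (\<lambda>c. re_roots k (\<sigma> c) (S c)) =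
      (fps_exp 1 oo (\<Sum>g\<in>GOset k l. fps_const (real l ^ (g - 1) / real g) * fps_X ^ g)) *
      (fps_cosh 1 oo (\<Sum>g\<in>GEset k l. fps_const (real l ^ (g - 1) / real g) * fps_X ^ g))
    \<and> egf (\<lambda>c. ro_roots k (\<sigma> c) (S c)) =
      (fps_exp 1 oo (\<Sum>g\<in>GOset k l. fps_const (real l ^ (g - 1) / real g) * fps_X ^ g)) *
      (fps_sinh 1 oo (\<Sum>g\<in>GEset k l. fps_const (real l ^ (g - 1) / real g) * fps_X ^ g))
    \<and> egf (\<lambda>c. re_roots k id (T c)) =
      (fps_exp 1 oo (\<Sum>g\<in>{g. g dvd k \<and> odd g}. fps_const (1 / real g) * fps_X ^ g)) *
      (fps_cosh 1 oo (\<Sum>g\<in>{g. g dvd k \<and> even g}. fps_const (1 / real g) * fps_X ^ g))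
    \<and> egf (\<lambda>c. ro_roots k id (T c)) =
      (fps_exp 1 oo (\<Sum>g\<in>{g. g dvd k \<and> odd g}. fps_const (1 / real g) * fps_X ^ g)) *
      (fps_sinh 1 oo (\<Sum>g\<in>{g. g dvd k \<and> even g}. fps_const (1 / real g) * fps_X ^ g))"
proof -
  have "has_cycle_type id (T c) 1 c" for c
    using has_cycle_type_id assms(5) by blast
  note identity_roots = egf_roots[of k 1, OF assms(1) odd_one this]
  note roots = egf_roots[OF assms(1,3,4)]
  have "GOset k 1 = {g. g dvd k \<and> odd g}" and "GEset k 1 = {g. g dvd k \<and> even g}"
    unfolding GOset_def GEset_def Gset_one by auto
  with roots identity_roots show ?thesis
    unfolding roots_egf_def cycle_series_def by simp
qed

end
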